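(* Let $d\ge 1$, let $J:\mathbb{R}^d\to[0,\infty)$ be radially symmetric with $\int_{\mathbb{R}^d}J(x)\,{\rm d}x=1$, and let $F:[0,\infty)\to[0,\infty)$ be convex, of class $C^1$, with $F(0)=0$ and $\int^\infty\frac{{\rm d}u}{F(u)}<\infty$. Consider the Cauchy problem $$u_t=J\ast u-u+F(u),\quad x\in\mathbb{R}^d,\ t>0,\qquad u(x,0)=u_0(x)\ge 0.$$ Let $h(w)=\int_w^\infty\frac{{\rm d}u}{F(u)}$ (a decreasing function with $h(0)=\infty$, $h(\infty)=0$) and let $h^{-1}$ be its inverse. For $T>0$ and a solution $u$ define, for $t\in[0,T)$, $$W_T(t)=\int_{\mathbb{R}^d}k_{T-t}(x)\,u(x,t)\,{\rm d}x,$$ where $k_s$ is the kernel defined below. Suppose $u_0\ge 0$ satisfies, for some $T>0$, $$\frac{W_T(0)}{h^{-1}(T)}>1,$$ i.e. $\int_{\mathbb{R}^d}k_T(x)u_0(x)\,{\rm d}x>h^{-1}(T)$. Then any local-in-time classical solution $u=u(x,t)$ of this Cauchy problem cannot be continued beyond $t=T$.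
   Context: The operator $\mathcal{A}u=J\ast u-u$ on $L^1(\mathbb{R}^d)$ generates a semigroup of convolution operators ${\rm e}^{t\mathcal{A}}$ whose kernels $k_t\in L^1(\mathbb{R}^d)$, $\int k_t=1$, are given by $k_t=\mathcal{F}^{-1}\big({\rm e}^{t(\widehat J(\xi)-1)}\big)$, where $\mathcal{F}^{-1}$ is the inverse Fourier transform on $\mathbb{R}^d$ and $\widehat J$ is the Fourier transform of $J$. *)

theory Defs
  imports "HOL-Analysis.Analysis"
begin

text \<open>Convolution powers: Jconv J n = J * J * ... * J  (n+1 factors).\<close>
fun Jconv :: "('a::euclidean_space \<Rightarrow> real) \<Rightarrow> nat \<Rightarrow> 'a \<Rightarrow> real" where
  "Jconv J 0 = J"
| "Jconv J (Suc n) = (\<lambda>x. \<integral>y. J (x - y) * Jconv J n y \<partial>lborel)"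

text \<open>The pairing of the kernel k_s = F^{-1}(exp(s(hat J - 1))) with a nonnegative function f:
  since exp(s(hat J - 1)) = exp(-s) * sum_n s^n hat J^n / n!, the kernel is the probability
  measure k_s = exp(-s) (delta_0 + sum_{n>=1} s^n/n! J^{*n}), and
  kint J s f = integral of k_s(x) f(x) dx  (valued in [0,infinity]).\<close>
definition kint :: "('a::euclidean_space \<Rightarrow> real) \<Rightarrow> real \<Rightarrow> ('a \<Rightarrow> real) \<Rightarrow> ennreal" where
  "kint J s f = ennreal (exp (- s)) *
     (ennreal (f 0) + (\<Sum>n. ennreal (s ^ Suc n / fact (Suc n)) *
        (\<integral>\<^sup>+ x. ennreal (Jconv J n x * f x) \<partial>lborel)))"

definition hfun :: "(real \<Rightarrow> real) \<Rightarrow> real \<Rightarrow> ennreal" where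
  "hfun F w = (\<integral>\<^sup>+ u\<in>{w..}. (if F u > 0 then ennreal (1 / F u) else \<infinity>) \<partial>lborel)"

definition hinv :: "(real \<Rightarrow> real) \<Rightarrow> real \<Rightarrow> real" where
  "hinv F T = (THE w. w > 0 \<and> hfun F w = ennreal T)"

definition classical_solution ::
  "('a::euclidean_space \<Rightarrow> real) \<Rightarrow> (real \<Rightarrow> real) \<Rightarrow> ('a \<Rightarrow> real) \<Rightarrow> real \<Rightarrow> ('a \<Rightarrow> real \<Rightarrow> real) \<Rightarrow> bool"
  where
  "classical_solution J F u0 S u \<longleftrightarrow>
     S > 0 \<and>
     (\<forall>x. u x 0 = u0 x) \<and>
     continuous_on (UNIV \<times> {0..<S}) (\<lambda>(x, t). u x t) \<and>
     (\<forall>t'\<in>{0..<S}. bounded ((\<lambda>(x, t). u x t) ` (UNIV \<times> {0..t'}))) \<and>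
     (\<forall>x. \<forall>t\<in>{0..<S}. u x t \<ge> 0) \<and>
     (\<forall>x. \<forall>t\<in>{0<..<S}.
        ((\<lambda>s. u x s) has_real_derivative
           ((\<integral>y. J (x - y) * u y t \<partial>lborel) - u x t + F (u x t))) (at t))"

end

(*
  Let W(t) be the pairing of u(t) with the kernel k_{T-t}.  Expanding
  k_s = e^{-s} sum_m s^m/m! J^{*m} (with J^{*0} the Dirac mass) writes W(t) as
  sum_m c_m(t) A_m(t), where c_m(t) = e^{t-T} (T-t)^m/m! and A_m(t) is the pairing of u(t)
  with J^{*m}.  The equation gives A_m' = A_{m+1} - A_m + B_m, with B_m the pairing of F(u(t))
  with J^{*m}, while c_m' = c_m - c_{m-1}; the A-terms telescope and W' = sum_m c_m B_m.
  Since sum_m c_m J^{*m} is a probability measure and F is convex, Jensen gives W' >= F(W).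
  So W is a supersolution of w' = F(w) on (0, T), whence T <= int_{W(0)}^oo du/F(u) = h(W(0)).
  This contradicts W(0) > h^{-1}(T), i.e. h(W(0)) < T.
*)
theory Submission
  imports Defs
begin

section \<open>Convolution powers of a symmetric probability density\<close>

lemma nn_integral_lborel_shift:
  fixes g :: "'a::euclidean_space \<Rightarrow> ennreal"
  assumes "g \<in> borel_measurable borel"
  shows "(\<integral>\<^sup>+x. g (x + c) \<partial>lborel) = (\<integral>\<^sup>+x. g x \<partial>lborel)"
proof -
  have "(\<integral>\<^sup>+x. g x \<partial>lborel) = (\<integral>\<^sup>+x. g x \<partial>distr lborel borel ((+) c))"
    by (simp add: lborel_distr_plus)
  also have "\<dots> = (\<integral>\<^sup>+x. g (c + x) \<partial>lborel)"
    by (subst nn_integral_distr) (auto simp: assms)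
  finally show ?thesis by (simp add: add.commute)
qed

locale symmetric_probability_density =
  fixes J :: "'a::euclidean_space \<Rightarrow> real"
  assumes J_nonneg: "\<And>x. J x \<ge> 0"
    and J_symmetric: "\<And>x. J (- x) = J x"
    and J_measurable[measurable]: "J \<in> borel_measurable borel"
    and nn_integral_J: "(\<integral>\<^sup>+x. ennreal (J x) \<partial>lborel) = 1"
begin

lemma J_minus_commute: "J (y - x) = J (x - y)"
  using J_symmetric[of "x - y"] by simp

lemma nn_integral_J_shift: "(\<integral>\<^sup>+x. ennreal (J (x - y)) \<partial>lborel) = 1"
  using nn_integral_lborel_shift[of "\<lambda>x. ennreal (J x)" "- y"] nn_integral_J by simp

lemma nn_integral_J_reflect: "(\<integral>\<^sup>+x. ennreal (J (y - x)) \<partial>lborel) = 1"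
  using nn_integral_J_shift[of y] by (subst J_minus_commute)

lemma borel_measurable_convolution:
  assumes [measurable]: "K \<in> borel_measurable borel"
  shows "(\<lambda>y. \<integral>x. J (y - x) * K x \<partial>lborel) \<in> borel_measurable borel"
proof -
  have "(\<lambda>(y, x). J (y - x) * K x) \<in> borel_measurable (lborel \<Otimes>\<^sub>M lborel)"
    by measurable
  from lborel.borel_measurable_lebesgue_integral[OF this] show ?thesis by simp
qed

lemma convolution_probability_density:
  assumes [measurable]: "K \<in> borel_measurable borel"
    and K_nonneg: "\<And>x. K x \<ge> 0" and K_mass: "(\<integral>\<^sup>+x. ennreal (K x) \<partial>lborel) = 1"
  defines "G \<equiv> \<lambda>y. \<integral>x. J (y - x) * K x \<partial>lborel"
  shows "G \<in> borel_measurable borel" "\<And>y. G y \<ge> 0"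
    "AE y in lborel. ennreal (G y) = (\<integral>\<^sup>+x. ennreal (J (y - x) * K x) \<partial>lborel)"
    "(\<integral>\<^sup>+y. ennreal (G y) \<partial>lborel) = 1"
proof -
  show "G \<in> borel_measurable borel"
    unfolding G_def by (rule borel_measurable_convolution) fact
  show "G y \<ge> 0" for y
    unfolding G_def by (intro integral_nonneg_AE) (auto intro!: mult_nonneg_nonneg J_nonneg K_nonneg)
  define I where "I y = (\<integral>\<^sup>+x. ennreal (J (y - x) * K x) \<partial>lborel)" for y
  have [measurable]: "I \<in> borel_measurable borel"
    unfolding I_def by measurable
  have "(\<integral>\<^sup>+y. I y \<partial>lborel) = (\<integral>\<^sup>+x. (\<integral>\<^sup>+y. ennreal (J (y - x) * K x) \<partial>lborel) \<partial>lborel)"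
    unfolding I_def by (rule lborel_pair.Fubini') measurable
  also have "\<dots> = (\<integral>\<^sup>+x. (\<integral>\<^sup>+y. ennreal (J (y - x)) \<partial>lborel) * ennreal (K x) \<partial>lborel)"
    by (intro nn_integral_cong, subst nn_integral_multc[symmetric])
      (auto simp: ennreal_mult J_nonneg K_nonneg)
  finally have I_mass: "(\<integral>\<^sup>+y. I y \<partial>lborel) = 1"
    using K_mass nn_integral_J_shift by simp
  then have "AE y in lborel. I y \<noteq> \<infinity>"
    by (intro nn_integral_PInf_AE) auto
  then show AE_eq: "AE y in lborel. ennreal (G y) = I y"
  proof eventually_elim
    case (elim y)
    have "G y = enn2real (I y)"
      unfolding G_def I_def
      by (rule integral_eq_nn_integral) (auto intro!: mult_nonneg_nonneg J_nonneg K_nonneg)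
    with elim show ?case by (simp add: ennreal_enn2real_if)
  qed
  show "(\<integral>\<^sup>+y. ennreal (G y) \<partial>lborel) = 1"
    using nn_integral_cong_AE[OF AE_eq] I_mass by simp
qed

lemma Jconv_probability_density:
  "Jconv J n \<in> borel_measurable borel \<and> (\<forall>x. Jconv J n x \<ge> 0) \<and>
   (\<integral>\<^sup>+x. ennreal (Jconv J n x) \<partial>lborel) = 1"
proof (induction n)
  case 0
  then show ?case using nn_integral_J J_nonneg by simp
next
  case (Suc n)
  then have [measurable]: "Jconv J n \<in> borel_measurable borel" by simp
  from convolution_probability_density[of "Jconv J n"] Suc show ?case by simp
qed

declare Jconv.simps(2)[simp del]

lemma Jconv_measurable[measurable]: "Jconv J n \<in> borel_measurable borel"
  using Jconv_probability_density by blast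

lemma Jconv_nonneg: "Jconv J n x \<ge> 0"
  using Jconv_probability_density by blast

lemma nn_integral_Jconv: "(\<integral>\<^sup>+x. ennreal (Jconv J n x) \<partial>lborel) = 1"
  using Jconv_probability_density by blast

lemma AE_Jconv_Suc:
  "AE y in lborel. ennreal (Jconv J (Suc n) y) = (\<integral>\<^sup>+x. ennreal (J (y - x) * Jconv J n x) \<partial>lborel)"
  using convolution_probability_density(3)[OF Jconv_measurable Jconv_nonneg nn_integral_Jconv]
  by (simp add: Jconv.simps(2))

lemma integrable_Jconv: "integrable lborel (Jconv J n)"
  by (rule integrableI_nonneg) (auto simp: Jconv_nonneg nn_integral_Jconv)

lemma integral_Jconv: "(\<integral>x. Jconv J n x \<partial>lborel) = 1"
  by (subst integral_eq_nn_integral) (auto simp: Jconv_nonneg nn_integral_Jconv)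

lemma integrable_Jconv_mult:
  assumes [measurable]: "f \<in> borel_measurable borel" and "\<And>x. \<bar>f x\<bar> \<le> B"
  shows "integrable lborel (\<lambda>x. Jconv J n x * f x)"
proof (rule Bochner_Integration.integrable_bound)
  show "integrable lborel (\<lambda>x. B * Jconv J n x)"
    using integrable_Jconv by simp
  show "AE x in lborel. norm (Jconv J n x * f x) \<le> norm (B * Jconv J n x)"
  proof (intro AE_I2)
    fix x
    have "\<bar>f x\<bar> * Jconv J n x \<le> \<bar>B\<bar> * Jconv J n x"
      using assms(2)[of x] abs_ge_self[of B] Jconv_nonneg by (intro mult_right_mono) auto
    then show "norm (Jconv J n x * f x) \<le> norm (B * Jconv J n x)"
      using Jconv_nonneg by (simp add: abs_mult mult.commute)
  qed
qed measurable

end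

text \<open>\<open>Jpow_pair J m f\<close> is the pairing of \<open>f\<close> with the \<open>m\<close>-th convolution power \<open>J\<^sup>*\<^sup>m\<close>, where
  \<open>J\<^sup>*\<^sup>0\<close> is the Dirac mass at \<open>0\<close>; note that \<open>Jconv J n\<close> has \<open>n + 1\<close> factors.\<close>

definition Jpow_pair :: "('a::euclidean_space \<Rightarrow> real) \<Rightarrow> nat \<Rightarrow> ('a \<Rightarrow> real) \<Rightarrow> real" where
  "Jpow_pair J m f = (case m of 0 \<Rightarrow> f 0 | Suc n \<Rightarrow> \<integral>x. Jconv J n x * f x \<partial>lborel)"

context symmetric_probability_density
begin

lemma Jpow_pair_affine:
  assumes [measurable]: "f \<in> borel_measurable borel" and "\<And>x. \<bar>f x\<bar> \<le> B"
  shows "Jpow_pair J m (\<lambda>x. a + c * f x) = a + c * Jpow_pair J m f"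
proof (cases m)
  case (Suc n)
  have "(\<integral>x. Jconv J n x * (a + c * f x) \<partial>lborel)
      = (\<integral>x. a * Jconv J n x + c * (Jconv J n x * f x) \<partial>lborel)"
    by (simp add: algebra_simps)
  also have "\<dots> = a + c * (\<integral>x. Jconv J n x * f x \<partial>lborel)"
    using integrable_Jconv integrable_Jconv_mult[OF assms] by (simp add: integral_Jconv)
  finally show ?thesis using Suc by (simp add: Jpow_pair_def)
qed (simp add: Jpow_pair_def)

lemma Jpow_pair_const: "Jpow_pair J m (\<lambda>x. c) = c"
  using Jpow_pair_affine[of "\<lambda>x. 0" 0 m c 0] by simp

lemma Jpow_pair_diff_add:
  assumes [measurable]: "f \<in> borel_measurable borel" "g \<in> borel_measurable borel"
      "h \<in> borel_measurable borel"
    and "\<And>x. \<bar>f x\<bar> \<le> B" "\<And>x. \<bar>g x\<bar> \<le> B" "\<And>x. \<bar>h x\<bar> \<le> B"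
  shows "Jpow_pair J m (\<lambda>x. f x - g x + h x) = Jpow_pair J m f - Jpow_pair J m g + Jpow_pair J m h"
proof (cases m)
  case (Suc n)
  have "(\<integral>x. Jconv J n x * (f x - g x + h x) \<partial>lborel)
      = (\<integral>x. Jconv J n x * f x - Jconv J n x * g x + Jconv J n x * h x \<partial>lborel)"
    by (simp add: algebra_simps)
  also have "\<dots> = (\<integral>x. Jconv J n x * f x \<partial>lborel) - (\<integral>x. Jconv J n x * g x \<partial>lborel)
      + (\<integral>x. Jconv J n x * h x \<partial>lborel)"
    using integrable_Jconv_mult[of f B n] integrable_Jconv_mult[of g B n]
      integrable_Jconv_mult[of h B n] assms by simp
  finally show ?thesis using Suc by (simp add: Jpow_pair_def)
qed (simp add: Jpow_pair_def)

lemma Jpow_pair_mono: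
  assumes [measurable]: "f \<in> borel_measurable borel" "g \<in> borel_measurable borel"
    and "\<And>x. \<bar>f x\<bar> \<le> B" "\<And>x. \<bar>g x\<bar> \<le> B" and "\<And>x. f x \<le> g x"
  shows "Jpow_pair J m f \<le> Jpow_pair J m g"
proof (cases m)
  case (Suc n)
  have "(\<integral>x. Jconv J n x * f x \<partial>lborel) \<le> (\<integral>x. Jconv J n x * g x \<partial>lborel)"
    using integrable_Jconv_mult[of f B n] integrable_Jconv_mult[of g B n] assms
    by (intro integral_mono) (auto intro!: mult_left_mono Jconv_nonneg)
  then show ?thesis using Suc by (simp add: Jpow_pair_def)
qed (use assms in \<open>simp add: Jpow_pair_def\<close>)

lemma Jpow_pair_bounds:
  assumes [measurable]: "f \<in> borel_measurable borel" and "\<And>x. a \<le> f x" "\<And>x. f x \<le> b"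
  shows "a \<le> Jpow_pair J m f \<and> Jpow_pair J m f \<le> b"
proof -
  have "\<bar>f x\<bar> \<le> \<bar>a\<bar> + \<bar>b\<bar>" for x
    using assms(2,3)[of x] by linarith
  then have "Jpow_pair J m (\<lambda>x. a) \<le> Jpow_pair J m f \<and> Jpow_pair J m f \<le> Jpow_pair J m (\<lambda>x. b)"
    using assms by (intro conjI Jpow_pair_mono[where B="\<bar>a\<bar> + \<bar>b\<bar>"]) auto
  then show ?thesis by (simp add: Jpow_pair_const)
qed

lemma Jpow_pair_affine_le:
  assumes [measurable]: "f \<in> borel_measurable borel" "g \<in> borel_measurable borel"
    and f_le: "\<And>x. \<bar>f x\<bar> \<le> B" and g_le: "\<And>x. \<bar>g x\<bar> \<le> B" and "\<And>x. a + c * f x \<le> g x"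
  shows "a + c * Jpow_pair J m f \<le> Jpow_pair J m g"
proof -
  have "\<bar>a + c * f x\<bar> \<le> \<bar>a\<bar> + \<bar>c\<bar> * B + B" for x
  proof -
    have "\<bar>c * f x\<bar> \<le> \<bar>c\<bar> * B"
      using f_le[of x] by (simp add: abs_mult mult_left_mono)
    then show ?thesis
      using abs_triangle_ineq[of a "c * f x"] f_le[of x] by linarith
  qed
  moreover have "\<bar>g x\<bar> \<le> \<bar>a\<bar> + \<bar>c\<bar> * B + B" for x
    using g_le[of x] abs_ge_zero[of a] mult_nonneg_nonneg[OF abs_ge_zero[of c] order.trans[OF abs_ge_zero g_le]]
    by linarith
  ultimately have "Jpow_pair J m (\<lambda>x. a + c * f x) \<le> Jpow_pair J m g"
    using assms(5) by (intro Jpow_pair_mono[where B="\<bar>a\<bar> + \<bar>c\<bar> * B + B"]) auto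
  then show ?thesis
    using Jpow_pair_affine[OF assms(1) f_le] by simp
qed

lemma convolution_bounds:
  assumes [measurable]: "f \<in> borel_measurable borel"
    and f_nonneg: "\<And>x. f x \<ge> 0" and f_le: "\<And>x. f x \<le> B"
  shows "ennreal (\<integral>y. J (x - y) * f y \<partial>lborel) = (\<integral>\<^sup>+y. ennreal (J (x - y) * f y) \<partial>lborel)"
    and "0 \<le> (\<integral>y. J (x - y) * f y \<partial>lborel)"
    and "(\<integral>y. J (x - y) * f y \<partial>lborel) \<le> B"
proof -
  have B_nonneg: "B \<ge> 0"
    using f_nonneg[of 0] f_le[of 0] by simp
  have "(\<integral>\<^sup>+y. ennreal (J (x - y) * f y) \<partial>lborel) \<le> (\<integral>\<^sup>+y. ennreal B * ennreal (J (x - y)) \<partial>lborel)"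
    by (intro nn_integral_mono)
      (auto simp: ennreal_mult'[symmetric] B_nonneg J_nonneg f_nonneg f_le mult.commute
        intro!: ennreal_leI mult_right_mono)
  also have "\<dots> = ennreal B"
    by (subst nn_integral_cmult) (auto simp: nn_integral_J_reflect)
  finally have le_B: "(\<integral>\<^sup>+y. ennreal (J (x - y) * f y) \<partial>lborel) \<le> ennreal B" .
  have eq: "(\<integral>y. J (x - y) * f y \<partial>lborel) = enn2real (\<integral>\<^sup>+y. ennreal (J (x - y) * f y) \<partial>lborel)"
    by (rule integral_eq_nn_integral) (auto intro!: mult_nonneg_nonneg J_nonneg f_nonneg)
  show "ennreal (\<integral>y. J (x - y) * f y \<partial>lborel) = (\<integral>\<^sup>+y. ennreal (J (x - y) * f y) \<partial>lborel)"
    unfolding eq using le_B by (auto simp: ennreal_enn2real_if top_unique)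
  show "0 \<le> (\<integral>y. J (x - y) * f y \<partial>lborel)"
    unfolding eq by simp
  show "(\<integral>y. J (x - y) * f y \<partial>lborel) \<le> B"
    unfolding eq using enn2real_mono[OF le_B] B_nonneg by simp
qed

text \<open>Fubini together with the symmetry of \<open>J\<close> moves the convolution onto the kernel.\<close>

lemma nn_integral_Jconv_convolution:
  assumes [measurable]: "f \<in> borel_measurable borel" and f_nonneg: "\<And>x. f x \<ge> 0"
  shows "(\<integral>\<^sup>+x. ennreal (Jconv J n x) * (\<integral>\<^sup>+y. ennreal (J (x - y) * f y) \<partial>lborel) \<partial>lborel)
    = (\<integral>\<^sup>+y. ennreal (Jconv J (Suc n) y * f y) \<partial>lborel)"
proof -
  have "(\<integral>\<^sup>+x. ennreal (Jconv J n x) * (\<integral>\<^sup>+y. ennreal (J (x - y) * f y) \<partial>lborel) \<partial>lborel)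
      = (\<integral>\<^sup>+x. (\<integral>\<^sup>+y. ennreal (f y) * ennreal (J (y - x) * Jconv J n x) \<partial>lborel) \<partial>lborel)"
    by (subst nn_integral_cmult[symmetric])
      (auto simp: ennreal_mult'[symmetric] Jconv_nonneg J_nonneg f_nonneg J_minus_commute mult_ac
        intro!: nn_integral_cong)
  also have "\<dots> = (\<integral>\<^sup>+y. (\<integral>\<^sup>+x. ennreal (f y) * ennreal (J (y - x) * Jconv J n x) \<partial>lborel) \<partial>lborel)"
    by (rule lborel_pair.Fubini'[symmetric]) measurable
  also have "\<dots> = (\<integral>\<^sup>+y. ennreal (f y) * (\<integral>\<^sup>+x. ennreal (J (y - x) * Jconv J n x) \<partial>lborel) \<partial>lborel)"
    by (intro nn_integral_cong nn_integral_cmult) measurable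
  also have "\<dots> = (\<integral>\<^sup>+y. ennreal (Jconv J (Suc n) y * f y) \<partial>lborel)"
    using AE_Jconv_Suc[of n]
    by (intro nn_integral_cong_AE, eventually_elim)
      (simp add: ennreal_mult' f_nonneg mult.commute)
  finally show ?thesis .
qed

lemma Jpow_pair_convolution:
  assumes [measurable]: "f \<in> borel_measurable borel"
    and f_nonneg: "\<And>x. f x \<ge> 0" and f_le: "\<And>x. f x \<le> B"
  shows "Jpow_pair J m (\<lambda>x. \<integral>y. J (x - y) * f y \<partial>lborel) = Jpow_pair J (Suc m) f"
proof (cases m)
  case 0
  have "J (0 - y) = Jconv J 0 y" for y
    using J_symmetric[of y] by simp
  then show ?thesis using 0 by (simp add: Jpow_pair_def)
next
  case (Suc n)
  define Jf where "Jf x = (\<integral>y. J (x - y) * f y \<partial>lborel)" for x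
  note Jf_bounds = convolution_bounds[OF assms, folded Jf_def]
  have [measurable]: "Jf \<in> borel_measurable borel"
    unfolding Jf_def[abs_def] by (rule borel_measurable_convolution) fact
  have "ennreal (\<integral>x. Jconv J n x * Jf x \<partial>lborel) = (\<integral>\<^sup>+x. ennreal (Jconv J n x * Jf x) \<partial>lborel)"
    using Jf_bounds(2,3) Jconv_nonneg
    by (intro nn_integral_eq_integral[symmetric] integrable_Jconv_mult[where B=B]) auto
  also have "\<dots> = (\<integral>\<^sup>+y. ennreal (Jconv J (Suc n) y * f y) \<partial>lborel)"
    using Jf_bounds(1,2) Jconv_nonneg
    by (simp add: ennreal_mult nn_integral_Jconv_convolution[OF assms(1,2)] flip: Jf_def)
  also have "\<dots> = ennreal (\<integral>y. Jconv J (Suc n) y * f y \<partial>lborel)"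
    using f_nonneg f_le Jconv_nonneg
    by (intro nn_integral_eq_integral integrable_Jconv_mult[where B=B]) auto
  finally have "(\<integral>x. Jconv J n x * Jf x \<partial>lborel) = (\<integral>y. Jconv J (Suc n) y * f y \<partial>lborel)"
    using Jf_bounds(2) f_nonneg Jconv_nonneg
    by (subst (asm) ennreal_inj) (auto intro!: integral_nonneg_AE)
  then show ?thesis using Suc by (simp add: Jpow_pair_def Jf_def)
qed

lemma nn_integral_Jconv_mult:
  assumes [measurable]: "f \<in> borel_measurable borel"
    and f_nonneg: "\<And>x. 0 \<le> f x" and f_le: "\<And>x. f x \<le> B"
  shows "(\<integral>\<^sup>+x. ennreal (Jconv J n x * f x) \<partial>lborel) = ennreal (Jpow_pair J (Suc n) f)"
proof -
  have "\<bar>f x\<bar> \<le> B" for x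
    using f_nonneg[of x] f_le[of x] by simp
  then show ?thesis
    unfolding Jpow_pair_def using f_nonneg Jconv_nonneg
    by (auto intro!: nn_integral_eq_integral integrable_Jconv_mult)
qed

lemma tendsto_Jpow_pair:
  fixes g :: "real \<Rightarrow> 'a \<Rightarrow> real"
  assumes g_measurable: "\<And>s. s \<in> X \<Longrightarrow> g s \<in> borel_measurable borel"
    and g_bound: "\<And>s x. s \<in> X \<Longrightarrow> \<bar>g s x\<bar> \<le> B"
    and g_lim: "\<And>x. ((\<lambda>s. g s x) \<longlongrightarrow> l x) (at t within X)"
    and [measurable]: "l \<in> borel_measurable borel"
  shows "((\<lambda>s. Jpow_pair J m (g s)) \<longlongrightarrow> Jpow_pair J m l) (at t within X)"
proof (cases m)
  case 0
  then show ?thesis using g_lim[of 0] by (simp add: Jpow_pair_def)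
next
  case (Suc n)
  show ?thesis
    unfolding Suc Jpow_pair_def nat.case tendsto_at_iff_sequentially comp_def
  proof (intro allI impI)
    fix s :: "nat \<Rightarrow> real"
    assume s: "\<forall>i. s i \<in> X - {t}" "s \<longlonglongrightarrow> t"
    then have [measurable]: "g (s i) \<in> borel_measurable borel" for i
      using g_measurable by auto
    show "(\<lambda>i. \<integral>x. Jconv J n x * g (s i) x \<partial>lborel) \<longlonglongrightarrow> (\<integral>x. Jconv J n x * l x \<partial>lborel)"
    proof (rule integral_dominated_convergence[where w="\<lambda>x. B * Jconv J n x"])
      show "AE x in lborel. (\<lambda>i. Jconv J n x * g (s i) x) \<longlonglongrightarrow> Jconv J n x * l x"
        using g_lim s by (intro AE_I2 tendsto_mult_left) (auto simp: tendsto_at_iff_sequentially o_def)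
      show "AE x in lborel. norm (Jconv J n x * g (s i) x) \<le> B * Jconv J n x" for i
      proof (intro AE_I2)
        fix x
        have "Jconv J n x * \<bar>g (s i) x\<bar> \<le> Jconv J n x * B"
          using g_bound[of "s i" x] s Jconv_nonneg by (intro mult_left_mono) auto
        then show "norm (Jconv J n x * g (s i) x) \<le> B * Jconv J n x"
          using Jconv_nonneg by (simp add: abs_mult mult.commute)
      qed
    qed (use integrable_Jconv in auto)
  qed
qed

end

section \<open>The Osgood function \<open>h\<close> of a convex reaction term\<close>

lemma has_integral_inverse_linear:
  fixes a b w C :: real
  assumes "C > 0" "a < w" "w \<le> b"
  shows "((\<lambda>u. 1 / (C * (u - a))) has_integral (ln (b - a) - ln (w - a)) / C) {w..b}"
proof -
  have "((\<lambda>u. 1 / (C * (u - a))) has_integral (ln (b - a) / C - ln (w - a) / C)) {w..b}"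
  proof (rule fundamental_theorem_of_calculus[where f="\<lambda>u. ln (u - a) / C"])
    fix x assume "x \<in> {w..b}"
    then have "x - a > 0" using assms by auto
    then have "((\<lambda>u. ln (u - a) / C) has_real_derivative 1 / (C * (x - a))) (at x within {w..b})"
      using assms by (auto intro!: derivative_eq_intros simp: field_simps)
    then show "((\<lambda>u. ln (u - a) / C) has_vector_derivative 1 / (C * (x - a))) (at x within {w..b})"
      by (simp add: has_real_derivative_iff_has_vector_derivative)
  qed (use assms in simp)
  then show ?thesis by (simp add: diff_divide_distrib)
qed

locale convex_reaction =
  fixes F :: "real \<Rightarrow> real" and F' :: "real \<Rightarrow> real"
  assumes F_nonneg: "\<And>u. u \<ge> 0 \<Longrightarrow> F u \<ge> 0"
    and F_convex: "convex_on {0..} F"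
    and F_derivative: "\<And>u. u \<ge> 0 \<Longrightarrow> (F has_real_derivative F' u) (at u within {0..})"
    and F'_continuous: "continuous_on {0..} F'"
    and F_0: "F 0 = 0"
begin

lemma F_continuous: "continuous_on {0..} F"
  by (rule DERIV_continuous_on) (use F_derivative in auto)

text \<open>\<open>F\<close> is arbitrary on the negative reals; \<open>Fplus\<close> is a Borel measurable version of it.\<close>

definition Fplus :: "real \<Rightarrow> real" where
  "Fplus u = F (max 0 u)"

lemma Fplus_measurable[measurable]: "Fplus \<in> borel_measurable borel"
proof -
  have "continuous_on UNIV (F \<circ> max 0)"
    by (intro continuous_on_compose continuous_on_subset[OF F_continuous] continuous_intros) auto
  then show ?thesis
    by (simp add: Fplus_def[abs_def] o_def borel_measurable_continuous_onI)
qed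

lemma borel_measurable_F_comp:
  assumes "f \<in> borel_measurable M" "\<And>x. x \<in> space M \<Longrightarrow> f x \<ge> 0"
  shows "(\<lambda>x. F (f x)) \<in> borel_measurable M"
proof -
  have "(\<lambda>x. Fplus (f x)) \<in> borel_measurable M"
    using assms(1) by measurable
  then show ?thesis
    by (rule measurable_cong[THEN iffD1, rotated]) (use assms(2) in \<open>simp add: Fplus_def\<close>)
qed

definition h_density :: "real \<Rightarrow> ennreal" where
  "h_density u = (if Fplus u > 0 then ennreal (1 / Fplus u) else \<infinity>)"

lemma h_density_measurable[measurable]: "h_density \<in> borel_measurable borel"
  unfolding h_density_def by measurable

lemma hfun_eq_nn_integral: "w \<ge> 0 \<Longrightarrow> hfun F w = (\<integral>\<^sup>+u\<in>{w..}. h_density u \<partial>lborel)"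
  unfolding hfun_def
  by (intro nn_integral_cong) (auto simp: h_density_def Fplus_def indicator_def max_def)

lemma hfun_split:
  assumes "0 \<le> w" "w \<le> v"
  shows "hfun F w = (\<integral>\<^sup>+u\<in>{w..<v}. h_density u \<partial>lborel) + hfun F v"
proof -
  have "hfun F w = (\<integral>\<^sup>+u. h_density u * indicator {w..<v} u + h_density u * indicator {v..} u \<partial>lborel)"
    unfolding hfun_eq_nn_integral[OF assms(1)]
    by (intro nn_integral_cong) (use assms in \<open>auto simp: indicator_def\<close>)
  also have "\<dots> = (\<integral>\<^sup>+u\<in>{w..<v}. h_density u \<partial>lborel) + (\<integral>\<^sup>+u\<in>{v..}. h_density u \<partial>lborel)"
    by (rule nn_integral_add) auto
  finally show ?thesis
    using hfun_eq_nn_integral[of v] assms by simp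
qed

lemma hfun_antimono: "0 \<le> w \<Longrightarrow> w \<le> v \<Longrightarrow> hfun F v \<le> hfun F w"
  using hfun_split by simp

lemma nn_integral_h_density_pos:
  assumes "w < v"
  shows "(\<integral>\<^sup>+u\<in>{w..<v}. h_density u \<partial>lborel) > 0"
proof (rule ccontr)
  assume "\<not> ?thesis"
  then have "AE u in lborel. h_density u * indicator {w..<v} u = 0"
    by (subst nn_integral_0_iff_AE[symmetric]) auto
  then have "AE u in lborel. u \<notin> {w..<v}"
    by eventually_elim (auto simp: indicator_def h_density_def split: if_splits)
  then have "emeasure lborel {w..<v} = 0"
    by (subst AE_iff_measurable[symmetric, where P="\<lambda>u. u \<notin> {w..<v}"]) auto
  then show False using assms by simp
qed

lemma hfun_strict_antimono:
  assumes "0 \<le> w" "w < v" "hfun F v < \<infinity>"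
  shows "hfun F v < hfun F w"
proof -
  have "hfun F v + 0 < hfun F v + (\<integral>\<^sup>+u\<in>{w..<v}. h_density u \<partial>lborel)"
    using assms(3) nn_integral_h_density_pos[OF assms(2)]
    by (simp add: ennreal_add_left_cancel_less)
  then show ?thesis
    using hfun_split[of w v] assms by (simp add: add.commute)
qed

lemma F_eq_0_below:
  assumes "0 \<le> u" "u \<le> v" "F v = 0"
  shows "F u = 0"
proof (cases "v = 0")
  case False
  then have "v > 0" using assms by simp
  have "F ((1 - u / v) *\<^sub>R 0 + (u / v) *\<^sub>R v) \<le> (1 - u / v) * F 0 + (u / v) * F v"
    by (rule convex_onD[OF F_convex]) (use assms \<open>v > 0\<close> in auto)
  then show ?thesis
    using \<open>v > 0\<close> assms F_0 F_nonneg[of u] by simp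
qed (use assms F_0 in simp)

lemma F_pos_above:
  assumes "0 \<le> w" "hfun F w < \<infinity>" "w < v"
  shows "F v > 0"
proof (rule ccontr)
  assume "\<not> F v > 0"
  then have "F v = 0"
    using F_nonneg[of v] assms by simp
  then have "h_density u * indicator {w..<v} u = \<infinity> * indicator {w..<v} u" for u
    using F_eq_0_below[of u v] assms
    by (cases "u \<in> {w..<v}") (auto simp: h_density_def Fplus_def max_def)
  then have "(\<integral>\<^sup>+u\<in>{w..<v}. h_density u \<partial>lborel) = \<infinity>"
    using assms by (simp add: nn_integral_cmult_indicator ennreal_mult_top)
  then show False
    using hfun_split[of w v] assms by simp
qed

lemma h_density_interval:
  assumes "0 \<le> w" "w \<le> v" and F_pos: "\<And>u. w \<le> u \<Longrightarrow> u \<le> v \<Longrightarrow> F u > 0"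
  shows "(\<lambda>u. 1 / F u) integrable_on {w..v}"
    and "(\<integral>\<^sup>+u\<in>{w..<v}. h_density u \<partial>lborel) = ennreal (integral {w..v} (\<lambda>u. 1 / F u))"
proof -
  have "continuous_on {w..v} (\<lambda>u. 1 / F u)"
    by (intro continuous_on_divide continuous_on_const continuous_on_subset[OF F_continuous])
      (use F_pos assms in force)+
  then show integrable: "(\<lambda>u. 1 / F u) integrable_on {w..v}"
    by (rule integrable_continuous_interval)
  have "(\<integral>\<^sup>+u\<in>{w..v}. ennreal (1 / F u) \<partial>lborel) = ennreal (integral {w..v} (\<lambda>u. 1 / F u))"
    using integrable F_pos
    by (intro nn_integral_has_integral_lebesgue') (auto simp: less_imp_le)
  moreover have "(\<integral>\<^sup>+u\<in>{w..<v}. h_density u \<partial>lborel) = (\<integral>\<^sup>+u\<in>{w..v}. ennreal (1 / F u) \<partial>lborel)"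
    using AE_lborel_singleton[of v]
  proof (intro nn_integral_cong_AE, eventually_elim)
    case (elim u)
    then show ?case
      using assms F_pos[of u] by (auto simp: h_density_def Fplus_def max_def indicator_def)
  qed
  ultimately show "(\<integral>\<^sup>+u\<in>{w..<v}. h_density u \<partial>lborel) = ennreal (integral {w..v} (\<lambda>u. 1 / F u))"
    by simp
qed

lemma hfun_eq_integral_plus:
  assumes "0 \<le> w" "w \<le> v" "\<And>u. w \<le> u \<Longrightarrow> u \<le> v \<Longrightarrow> F u > 0"
  shows "hfun F w = ennreal (integral {w..v} (\<lambda>u. 1 / F u)) + hfun F v"
  using hfun_split[OF assms(1,2)] h_density_interval(2)[OF assms] by simp

lemma F_above_tangent:
  assumes "c \<ge> 0"
  shows "\<exists>D. \<forall>y\<ge>0. F y \<ge> F c + D * (y - c)"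
proof (cases "c = 0")
  case True
  then show ?thesis using F_0 F_nonneg by (intro exI[of _ 0]) auto
next
  case False
  have "F y - F c \<ge> F' c * (y - c)" if "y \<ge> 0" for y
    by (rule convex_on_imp_above_tangent[OF F_convex])
      (use False assms that F_derivative[of c] in \<open>auto simp: convex_connected\<close>)
  then show ?thesis by (intro exI[of _ "F' c"]) (auto simp: algebra_simps)
qed

lemma F_le_derivative_mult:
  assumes "a \<ge> 0" "F a = 0" "u > a"
  shows "F u \<le> F' u * (u - a)"
proof -
  have "F a - F u \<ge> F' u * (a - u)"
    by (rule convex_on_imp_above_tangent[OF F_convex])
      (use assms F_derivative[of u] in \<open>auto simp: convex_connected\<close>)
  then show ?thesis using assms by (simp add: algebra_simps)
qed

lemma largest_zero:
  assumes "0 \<le> a0" "hfun F a0 < \<infinity>"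
  obtains a where "0 \<le> a" "F a = 0" "\<And>v. v > a \<Longrightarrow> F v > 0"
proof -
  define Z where "Z = {v \<in> {0..}. F v = 0}"
  have "closed Z"
    unfolding Z_def by (rule continuous_closed_preimage_constant[OF F_continuous]) auto
  moreover have "0 \<in> Z"
    using F_0 by (simp add: Z_def)
  moreover have bdd: "bdd_above Z"
  proof (rule bdd_aboveI)
    show "v \<le> a0" if "v \<in> Z" for v
      using that F_pos_above[OF assms, of v] by (cases "v \<le> a0") (auto simp: Z_def)
  qed
  ultimately have "Sup Z \<in> Z"
    by (intro closed_contains_Sup) auto
  moreover have "F v > 0" if "v > Sup Z" for v
    using cSup_upper[OF _ bdd, of v] F_nonneg[of v] that \<open>Sup Z \<in> Z\<close>
    by (force simp: Z_def)
  ultimately show ?thesis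
    using that[of "Sup Z"] by (auto simp: Z_def)
qed

text \<open>Near a zero \<open>a\<close> of \<open>F\<close> the \<open>C\<^sup>1\<close> bound \<open>F u \<le> C (u - a)\<close> makes \<open>h\<close> diverge logarithmically.\<close>

lemma hfun_large_near_zero:
  assumes "0 \<le> a" "F a = 0" "\<And>v. v > a \<Longrightarrow> F v > 0" "T > 0"
  obtains w where "a < w" "w < a + 1" "ennreal T \<le> hfun F w"
proof -
  have "compact (F' ` {a..a+1})"
    by (rule compact_continuous_image[OF continuous_on_subset[OF F'_continuous]]) (use assms(1) in auto)
  then obtain B where "\<forall>v\<in>F' ` {a..a+1}. \<bar>v\<bar> \<le> B"
    using compact_imp_bounded bounded_real by blast
  then have B: "\<bar>F' u\<bar> \<le> B" if "u \<in> {a..a+1}" for u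
    using that by blast
  define C where "C = \<bar>B\<bar> + 1"
  have "C > 0" by (simp add: C_def add_nonneg_pos)
  have F_le: "F u \<le> C * (u - a)" if "a < u" "u \<le> a + 1" for u
  proof -
    have "F' u * (u - a) \<le> C * (u - a)"
      using B[of u] that by (intro mult_right_mono) (auto simp: C_def)
    then show ?thesis using F_le_derivative_mult[OF assms(1,2) that(1)] by linarith
  qed
  define w where "w = a + exp (- (C * T))"
  have "exp (- (C * T)) < 1"
    using \<open>C > 0\<close> assms(4) by simp
  then have w: "a < w" "w < a + 1"
    by (auto simp: w_def)
  have "T = integral {w..a+1} (\<lambda>u. 1 / (C * (u - a)))"
    using has_integral_inverse_linear[OF \<open>C > 0\<close>, of a w "a + 1"] w \<open>C > 0\<close>
    by (simp add: integral_unique w_def)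
  also have "\<dots> \<le> integral {w..a+1} (\<lambda>u. 1 / F u)"
  proof (rule integral_le)
    show "(\<lambda>u. 1 / (C * (u - a))) integrable_on {w..a+1}"
      using has_integral_integrable[OF has_integral_inverse_linear[OF \<open>C > 0\<close>, of a w "a + 1"]] w
      by simp
    show "(\<lambda>u. 1 / F u) integrable_on {w..a+1}"
      by (rule h_density_interval(1)) (use w assms in auto)
    fix u assume "u \<in> {w..a+1}"
    then have "0 < F u" "F u \<le> C * (u - a)"
      using assms(3)[of u] F_le[of u] w by auto
    then show "1 / (C * (u - a)) \<le> 1 / F u"
      by (intro divide_left_mono) auto
  qed
  also have "ennreal \<dots> \<le> hfun F w"
    using hfun_eq_integral_plus[of w "a + 1"] w assms by simp
  finally show ?thesis
    using that w by (simp add: ennreal_leI)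
qed

lemma hfun_shift_less:
  assumes "0 \<le> a" "hfun F a < \<infinity>" "T > 0"
  shows "\<exists>n::nat. hfun F (a + real n) < ennreal T"
proof (rule ccontr)
  assume "\<not> ?thesis"
  then have T_le: "ennreal T \<le> hfun F (a + real n)" for n
    by (auto simp: not_less)
  define I where "I n = (\<integral>\<^sup>+u\<in>{a..<a + real n}. h_density u \<partial>lborel)" for n :: nat
  have "(SUP n. I n) = (\<integral>\<^sup>+u. (SUP n. h_density u * indicator {a..<a + real n} u) \<partial>lborel)"
    unfolding I_def
    by (rule nn_integral_monotone_convergence_SUP[symmetric])
      (auto simp: incseq_def le_fun_def indicator_def)
  also have "\<dots> = hfun F a"
    unfolding hfun_eq_nn_integral[OF assms(1)]
  proof (intro nn_integral_cong)
    fix u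
    obtain n :: nat where "u - a < real n"
      using reals_Archimedean2 by blast
    then show "(SUP n. h_density u * indicator {a..<a + real n} u) = h_density u * indicator {a..} u"
      by (intro antisym SUP_least SUP_upper2[of n]) (auto simp: indicator_def)
  qed
  finally have "hfun F a + ennreal T = (SUP n. I n) + ennreal T"
    by simp
  also have "\<dots> = (SUP n. I n + ennreal T)"
    by (rule ennreal_SUP_add_left[symmetric]) simp
  also have "\<dots> \<le> hfun F a"
  proof (rule SUP_least)
    fix n
    show "I n + ennreal T \<le> hfun F a"
      using hfun_split[of a "a + real n"] T_le[of n] assms(1) add_left_mono by (simp add: I_def)
  qed
  finally have "hfun F a + ennreal T \<le> hfun F a + 0"
    by simp
  then show False
    using assms by (subst (asm) ennreal_add_left_cancel_le) auto
qed

text \<open>\<open>h\<close> is continuous beyond the largest zero \<open>a\<close> of \<open>F\<close>, exceeds \<open>T\<close> near \<open>a\<close> and drops below \<open>T\<close>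
  far out; the intermediate value theorem does the rest.\<close>

lemma hfun_attains:
  assumes "0 \<le> a0" "hfun F a0 < \<infinity>" "T > 0"
  shows "\<exists>w>0. hfun F w = ennreal T"
proof -
  obtain a where a: "0 \<le> a" "F a = 0" "\<And>v. v > a \<Longrightarrow> F v > 0"
    using largest_zero[OF assms(1,2)] by blast
  obtain w1 where w1: "a < w1" "ennreal T \<le> hfun F w1"
    using hfun_large_near_zero[OF a assms(3)] by blast
  obtain n :: nat where n: "hfun F (a0 + real n) < ennreal T"
    using hfun_shift_less[OF assms] by blast
  define w2 where "w2 = max (a0 + real n) w1"
  have F_pos: "F v > 0" if "w1 \<le> v" for v
    using a w1 that by simp
  have "hfun F w2 \<le> ennreal T"
    using hfun_antimono[of "a0 + real n" w2] assms n by (simp add: w2_def)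
  then obtain H where H: "hfun F w2 = ennreal H" "0 \<le> H" "H \<le> T"
    using assms(3) by (cases "hfun F w2") (auto simp: ennreal_le_iff top_unique)
  define q where "q w = integral {w..w2} (\<lambda>u. 1 / F u) + H" for w
  have hfun_q: "hfun F w = ennreal (q w) \<and> 0 \<le> q w" if "w1 \<le> w" "w \<le> w2" for w
  proof -
    have "0 \<le> integral {w..w2} (\<lambda>u. 1 / F u)"
      using h_density_interval(1)[of w w2] that a w1 F_pos
      by (intro integral_nonneg) (auto simp: less_imp_le)
    then show ?thesis
      using hfun_eq_integral_plus[of w w2] that a w1 F_pos H by (simp add: q_def ennreal_plus)
  qed
  have w12: "w1 \<le> w2"
    by (simp add: w2_def)
  have "continuous_on {w1..w2} q"
    unfolding q_def using h_density_interval(1)[of w1 w2] a w1 F_pos w12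
    by (intro continuous_intros indefinite_integral_continuous_1') auto
  moreover have "q w2 \<le> T" "T \<le> q w1"
    using hfun_q[of w2] hfun_q[of w1] H w1 w12 by (auto simp: q_def)
  ultimately obtain w where "w1 \<le> w" "w \<le> w2" "q w = T"
    using IVT2'[of q w2 T w1] w12 by auto
  then show ?thesis
    using hfun_q[of w] a w1 by (intro exI[of _ w]) auto
qed

lemma hinv_spec:
  assumes "0 \<le> a0" "hfun F a0 < \<infinity>" "T > 0"
  shows "hinv F T > 0" "hfun F (hinv F T) = ennreal T"
proof -
  have "\<exists>!w. w > 0 \<and> hfun F w = ennreal T"
  proof (rule ex_ex1I)
    show "\<exists>w. w > 0 \<and> hfun F w = ennreal T"
      using hfun_attains[OF assms] .
    show "w = v" if "w > 0 \<and> hfun F w = ennreal T" "v > 0 \<and> hfun F v = ennreal T" for w v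
      using hfun_strict_antimono[of w v] hfun_strict_antimono[of v w] that
      by (cases w v rule: linorder_cases) auto
  qed
  from theI'[OF this] show "hinv F T > 0" "hfun F (hinv F T) = ennreal T"
    by (simp_all add: hinv_def)
qed

end

section \<open>Poisson weights and the series derivative\<close>

text \<open>The weight of \<open>J\<^sup>*\<^sup>m\<close> in the kernel \<open>k\<^bsub>T-t\<^esub> = exp (t - T) \<Sum>\<^sub>m (T-t)\<^sup>m/m! J\<^sup>*\<^sup>m\<close>.\<close>

definition poisson_weight :: "real \<Rightarrow> nat \<Rightarrow> real \<Rightarrow> real" where
  "poisson_weight T m t = exp (t - T) * (T - t) ^ m / fact m"

lemma poisson_weight_has_derivative:
  "(poisson_weight T m has_real_derivative
     poisson_weight T m t - (case m of 0 \<Rightarrow> 0 | Suc k \<Rightarrow> poisson_weight T k t)) (at t)"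
proof (cases m)
  case 0
  then show ?thesis
    by (auto intro!: derivative_eq_intros simp: poisson_weight_def[abs_def])
next
  case (Suc k)
  have algebra: "(E * 1 * (x * P) + E * (n * P * (0 - 1))) / (n * f) = E * (x * P) / (n * f) - E * P / f"
    if "n > 0" "f > 0" for E x P n f :: real
    using that by (simp add: field_simps)
  have "((\<lambda>s. exp (s - T) * (T - s) ^ Suc k / fact (Suc k)) has_real_derivative
      (exp (t - T) * 1 * (T - t) ^ Suc k + exp (t - T) * (real (Suc k) * (T - t) ^ k * (0 - 1)))
        / fact (Suc k)) (at t)"
    by (intro derivative_eq_intros DERIV_cdivide) auto
  moreover have "(exp (t - T) * 1 * (T - t) ^ Suc k + exp (t - T) * (real (Suc k) * (T - t) ^ k * (0 - 1)))
      / fact (Suc k) = poisson_weight T (Suc k) t - poisson_weight T k t"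
    unfolding poisson_weight_def power_Suc fact_Suc by (rule algebra) auto
  ultimately show ?thesis
    using Suc by (simp add: poisson_weight_def[abs_def])
qed

lemma continuous_on_poisson_weight: "continuous_on X (poisson_weight T m)"
  by (rule DERIV_continuous_on) (rule has_field_derivative_at_within[OF poisson_weight_has_derivative])

lemma poisson_weight_bounds:
  assumes "t \<in> {0..T}"
  shows "0 \<le> poisson_weight T m t \<and> poisson_weight T m t \<le> T ^ m / fact m"
proof -
  have "exp (t - T) * (T - t) ^ m \<le> 1 * T ^ m"
    using assms by (intro mult_mono power_mono) auto
  then show ?thesis
    using assms by (auto simp: poisson_weight_def divide_right_mono)
qed

lemma abs_poisson_weight_mult_le:
  assumes "t \<in> {0..T}" "\<bar>a\<bar> \<le> B"
  shows "\<bar>poisson_weight T m t * a\<bar> \<le> T ^ m / fact m * B"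
proof -
  have "poisson_weight T m t * \<bar>a\<bar> \<le> T ^ m / fact m * B"
    using poisson_weight_bounds[OF assms(1), of m] assms(2) by (intro mult_mono) auto
  then show ?thesis
    using poisson_weight_bounds[OF assms(1), of m] by (simp add: abs_mult)
qed

lemma sums_exp_terms: "(\<lambda>m. x ^ m / fact m) sums exp (x::real)"
  using exp_converges[of x] by (simp add: divide_inverse mult.commute)

lemma summable_exp_terms: "summable (\<lambda>m. x ^ m / fact m :: real)"
  using sums_exp_terms by (rule sums_summable)

lemma sums_poisson_weight: "(\<lambda>m. poisson_weight T m t) sums 1"
proof -
  have "(\<lambda>m. exp (t - T) * ((T - t) ^ m / fact m)) sums (exp (t - T) * exp (T - t))"
    by (rule sums_mult[OF sums_exp_terms])
  then show ?thesis
    by (simp add: poisson_weight_def[abs_def] mult.assoc flip: exp_add)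
qed

lemma summable_poisson_weight_mult:
  assumes "t \<in> {0..T}" "\<And>m. \<bar>a m\<bar> \<le> B"
  shows "summable (\<lambda>m. poisson_weight T m t * a m)"
proof (rule summable_comparison_test[OF _ summable_mult2[OF summable_exp_terms, of T B]])
  show "\<exists>N. \<forall>m\<ge>N. norm (poisson_weight T m t * a m) \<le> T ^ m / fact m * B"
    using abs_poisson_weight_mult_le[OF assms] by auto
qed

lemma sums_telescoping_shift:
  fixes g :: "nat \<Rightarrow> 'a::real_normed_vector"
  assumes "summable g"
  shows "(\<lambda>m. g m - (case m of 0 \<Rightarrow> 0 | Suc k \<Rightarrow> g k)) sums 0"
proof -
  have "(\<lambda>m. case m of 0 \<Rightarrow> 0 | Suc k \<Rightarrow> g k) sums suminf g"
    using sums_Suc_iff[of "\<lambda>m. case m of 0 \<Rightarrow> 0 | Suc k \<Rightarrow> g k"] summable_sums[OF assms]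
    by simp
  from sums_diff[OF summable_sums[OF assms] this] show ?thesis by simp
qed

lemma has_real_derivative_suminf:
  assumes "\<And>n s. s \<in> {a<..<b} \<Longrightarrow> (f n has_real_derivative f' n s) (at s)"
    and "\<And>n s. s \<in> {a<..<b} \<Longrightarrow> \<bar>f' n s\<bar> \<le> N n" "summable N"
    and "t \<in> {a<..<b}" "summable (\<lambda>n. f n t)"
  shows "((\<lambda>s. \<Sum>n. f n s) has_real_derivative (\<Sum>n. f' n t)) (at t)"
proof (rule has_field_derivative_series'(2)[of "{a<..<b}"])
  show "uniformly_convergent_on {a<..<b} (\<lambda>n s. \<Sum>i<n. f' i s)"
    using assms(2,3) by (intro Weierstrass_m_test') auto
qed (use assms in \<open>auto intro: has_field_derivative_at_within simp: convex_real_interval\<close>)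

lemma (in symmetric_probability_density) kint_eq_suminf:
  assumes [measurable]: "f \<in> borel_measurable borel"
    and f_nonneg: "\<And>x. 0 \<le> f x" and f_le: "\<And>x. f x \<le> B" and "0 \<le> T"
  shows "kint J T f = ennreal (\<Sum>m. poisson_weight T m 0 * Jpow_pair J m f)"
proof -
  define P where "P m = Jpow_pair J m f" for m
  have P_bounds: "0 \<le> P m \<and> P m \<le> B" for m
    unfolding P_def using Jpow_pair_bounds[OF assms(1-3)] .
  have weight_Suc: "ennreal (exp (- T)) * (ennreal (T ^ Suc n / fact (Suc n)) * ennreal (P (Suc n)))
      = ennreal (poisson_weight T (Suc n) 0 * P (Suc n))" for n
    using P_bounds \<open>0 \<le> T\<close> by (simp add: poisson_weight_def ennreal_mult'[symmetric] mult_ac)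
  have summable: "summable (\<lambda>m. poisson_weight T m 0 * P m)"
    using P_bounds \<open>0 \<le> T\<close> by (intro summable_poisson_weight_mult[where B=B]) auto
  have nonneg: "0 \<le> poisson_weight T m 0 * P m" for m
    using P_bounds poisson_weight_bounds[of 0 T m] \<open>0 \<le> T\<close> by simp
  have head: "ennreal (exp (- T)) * ennreal (f 0) = ennreal (poisson_weight T 0 0 * P 0)"
    using f_nonneg by (simp add: poisson_weight_def P_def Jpow_pair_def ennreal_mult')
  have tail: "(\<Sum>n. ennreal (poisson_weight T (Suc n) 0 * P (Suc n)))
      = ennreal (\<Sum>n. poisson_weight T (Suc n) 0 * P (Suc n))"
    using summable nonneg summable_Suc_iff[of "\<lambda>m. poisson_weight T m 0 * P m"]
    by (intro suminf_ennreal2) auto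
  have "kint J T f = ennreal (exp (- T)) * ennreal (f 0)
      + ennreal (exp (- T)) * (\<Sum>n. ennreal (T ^ Suc n / fact (Suc n)) * ennreal (P (Suc n)))"
    by (simp only: kint_def nn_integral_Jconv_mult[OF assms(1-3)] P_def distrib_left)
  also have "\<dots> = ennreal (poisson_weight T 0 0 * P 0) + ennreal (\<Sum>n. poisson_weight T (Suc n) 0 * P (Suc n))"
    by (subst ennreal_suminf_cmult[symmetric]) (simp only: head weight_Suc tail)
  also have "\<dots> = ennreal (poisson_weight T 0 0 * P 0 + (\<Sum>n. poisson_weight T (Suc n) 0 * P (Suc n)))"
    using summable nonneg summable_Suc_iff[of "\<lambda>m. poisson_weight T m 0 * P m"]
    by (simp add: ennreal_plus suminf_nonneg)
  also have "\<dots> = ennreal (\<Sum>m. poisson_weight T m 0 * P m)"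
    using suminf_split_head[OF summable] by simp
  finally show ?thesis by (simp add: P_def)
qed

section \<open>Comparison with the ODE \<open>w' = F(w)\<close>\<close>

lemma le_if_subinterval_lengths_le:
  fixes T K :: real
  assumes "\<And>s t. 0 < s \<Longrightarrow> s < t \<Longrightarrow> t < T \<Longrightarrow> t - s \<le> K" "0 \<le> K"
  shows "T \<le> K"
proof (rule ccontr)
  assume "\<not> T \<le> K"
  with assms(1)[of "(T - K) / 4" "T - (T - K) / 4"] assms(2) show False
    by (simp add: field_simps)
qed

lemma has_real_derivative_integral_upper_comp:
  fixes f W :: "real \<Rightarrow> real"
  assumes "continuous_on {a..b} f" "open S" "t \<in> S" "\<And>s. s \<in> S \<Longrightarrow> W s \<in> {a..b}"
    and "(W has_real_derivative W') (at t)"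
  shows "((\<lambda>s. integral {a..W s} f) has_real_derivative f (W t) * W') (at t)"
proof -
  have "((\<lambda>v. integral {a..v} f) has_real_derivative f (W t)) (at (W t) within {a..b})"
    unfolding has_real_derivative_iff_has_vector_derivative
    using assms(1,3,4) by (intro integral_has_vector_derivative) auto
  then have "((\<lambda>v. integral {a..v} f) has_real_derivative f (W t)) (at (W t) within W ` S)"
    by (rule DERIV_subset) (use assms(4) in auto)
  from DERIV_image_chain[OF this has_field_derivative_at_within[OF assms(5)]]
  show ?thesis
    using at_within_open[OF assms(3,2)] by (simp add: o_def)
qed

text \<open>For a supersolution of \<open>w' = F(w)\<close>, the function \<open>t \<mapsto> \<integral>\<^bsub>a\<^esub>\<^bsup>W t\<^esup> 1/F - t\<close> is nondecreasing.\<close>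

lemma supersolution_lifetime_le:
  fixes F W W' :: "real \<Rightarrow> real"
  assumes F_continuous: "continuous_on {a..b} F" and F_pos: "\<And>v. v \<in> {a..b} \<Longrightarrow> F v > 0"
    and W_range: "\<And>t. t \<in> {0<..<T} \<Longrightarrow> W t \<in> {a..b}"
    and W_derivative: "\<And>t. t \<in> {0<..<T} \<Longrightarrow> (W has_real_derivative W' t) (at t)"
    and supersolution: "\<And>t. t \<in> {0<..<T} \<Longrightarrow> F (W t) \<le> W' t"
  shows "T \<le> integral {a..b} (\<lambda>v. 1 / F v)"
proof -
  have inverse_continuous: "continuous_on {a..b} (\<lambda>v. 1 / F v)"
    by (intro continuous_on_divide continuous_on_const F_continuous) (use F_pos in fastforce)
  define G where "G v = integral {a..v} (\<lambda>v. 1 / F v)" for v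
  have G_range: "0 \<le> G v \<and> G v \<le> G b" if "v \<in> {a..b}" for v
    unfolding G_def using that F_pos
    by (intro conjI integral_nonneg integral_subset_le integrable_continuous_interval
        continuous_on_subset[OF inverse_continuous]) (auto simp: less_imp_le)
  have "t - s \<le> G b" if "0 < s" "s < t" "t < T" for s t
  proof -
    have "G (W s) - s \<le> G (W t) - t"
    proof (rule DERIV_nonneg_imp_nondecreasing[of s t])
      fix x assume "s \<le> x" "x \<le> t"
      then have x: "x \<in> {0<..<T}" using that by auto
      have "((\<lambda>t. G (W t)) has_real_derivative 1 / F (W x) * W' x) (at x)"
        unfolding G_def
        by (rule has_real_derivative_integral_upper_comp[OF inverse_continuous
            open_greaterThanLessThan x W_range W_derivative[OF x]])
      then have "((\<lambda>t. G (W t) - t) has_real_derivative 1 / F (W x) * W' x - 1) (at x)"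
        by (intro derivative_eq_intros) auto
      moreover have "1 \<le> 1 / F (W x) * W' x"
        using supersolution[OF x] F_pos[OF W_range[OF x]] by (simp add: field_simps)
      ultimately show "\<exists>y. ((\<lambda>t. G (W t) - t) has_real_derivative y) (at x) \<and> 0 \<le> y"
        by auto
    qed (use that in simp)
    then show ?thesis
      using G_range[OF W_range[of s]] G_range[OF W_range[of t]] that by auto
  qed
  moreover have "0 \<le> G b"
    using G_range[of b] by (cases "a \<le> b") (auto simp: G_def)
  ultimately show ?thesis
    unfolding G_def by (rule le_if_subinterval_lengths_le)
qed

section \<open>The functional \<open>W\<^sub>T\<close> along a bounded solution\<close>

locale bounded_solution = symmetric_probability_density J + convex_reaction F F'
  for J :: "'a::euclidean_space \<Rightarrow> real" and F F' +
  fixes u :: "'a \<Rightarrow> real \<Rightarrow> real" and T M FM :: real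
  assumes T_pos: "0 < T"
    and u_continuous: "continuous_on (UNIV \<times> {0..T}) (\<lambda>(x, t). u x t)"
    and u_nonneg: "\<And>x t. t \<in> {0..T} \<Longrightarrow> 0 \<le> u x t"
    and u_le: "\<And>x t. t \<in> {0..T} \<Longrightarrow> u x t \<le> M"
    and F_le: "\<And>v. v \<in> {0..M} \<Longrightarrow> F v \<le> FM"
    and u_has_derivative: "\<And>x t. t \<in> {0<..<T} \<Longrightarrow> ((\<lambda>s. u x s) has_real_derivative
       (\<integral>y. J (x - y) * u y t \<partial>lborel) - u x t + F (u x t)) (at t)"
begin

lemma u_continuous_on_space:
  assumes "t \<in> {0..T}"
  shows "continuous_on UNIV (\<lambda>x. u x t)"
proof -
  have "continuous_on UNIV (\<lambda>x. (x, t))" "(\<lambda>x. (x, t)) ` UNIV \<subseteq> UNIV \<times> {0..T}"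
    using assms by (auto intro!: continuous_intros)
  from continuous_on_compose2[OF u_continuous this] show ?thesis by simp
qed

lemma u_continuous_on_time: "continuous_on {0..T} (\<lambda>t. u x t)"
proof -
  have "continuous_on {0..T} (\<lambda>t. (x, t))" "(\<lambda>t. (x, t)) ` {0..T} \<subseteq> UNIV \<times> {0..T}"
    by (auto intro!: continuous_intros)
  from continuous_on_compose2[OF u_continuous this] show ?thesis by simp
qed

lemma u_measurable: "t \<in> {0..T} \<Longrightarrow> (\<lambda>x. u x t) \<in> borel_measurable borel"
  using u_continuous_on_space by (simp add: borel_measurable_continuous_onI)

lemma M_nonneg: "0 \<le> M"
  using u_nonneg[of 0 0] u_le[of 0 0] T_pos by auto

lemma FM_nonneg: "0 \<le> FM"
  using F_le[of 0] F_0 M_nonneg by auto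

lemma u_abs_le: "t \<in> {0..T} \<Longrightarrow> \<bar>u x t\<bar> \<le> M"
  using u_nonneg u_le by (simp add: abs_of_nonneg)

lemma Fu_measurable: "t \<in> {0..T} \<Longrightarrow> (\<lambda>x. F (u x t)) \<in> borel_measurable borel"
  using u_measurable u_nonneg by (intro borel_measurable_F_comp) auto

lemma Fu_bounds: "t \<in> {0..T} \<Longrightarrow> 0 \<le> F (u x t) \<and> F (u x t) \<le> FM"
  using F_nonneg F_le u_nonneg u_le by auto

definition Ju :: "real \<Rightarrow> 'a \<Rightarrow> real" where
  "Ju t x = (\<integral>y. J (x - y) * u y t \<partial>lborel)"

lemma Ju_measurable: "t \<in> {0..T} \<Longrightarrow> Ju t \<in> borel_measurable borel"
  unfolding Ju_def[abs_def] by (rule borel_measurable_convolution) (rule u_measurable)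

lemma Ju_bounds: "t \<in> {0..T} \<Longrightarrow> 0 \<le> Ju t x \<and> Ju t x \<le> M"
  unfolding Ju_def using convolution_bounds(2,3)[OF u_measurable u_nonneg u_le] by auto

definition dudt :: "real \<Rightarrow> 'a \<Rightarrow> real" where
  "dudt t x = Ju t x - u x t + F (u x t)"

lemma dudt_measurable: "t \<in> {0..T} \<Longrightarrow> dudt t \<in> borel_measurable borel"
  using Ju_measurable u_measurable Fu_measurable unfolding dudt_def[abs_def] by measurable

lemma dudt_abs_le: "t \<in> {0..T} \<Longrightarrow> \<bar>dudt t x\<bar> \<le> 2 * M + FM"
  using Ju_bounds[of t x] u_nonneg[of t x] u_le[of t x] Fu_bounds[of t x]
  unfolding dudt_def by linarith

lemma u_has_dudt: "t \<in> {0<..<T} \<Longrightarrow> ((\<lambda>s. u x s) has_real_derivative dudt t x) (at t)"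
  using u_has_derivative by (simp add: dudt_def Ju_def)

lemma u_lipschitz:
  assumes "s \<in> {0<..<T}" "t \<in> {0<..<T}"
  shows "\<bar>u x s - u x t\<bar> \<le> (2 * M + FM) * \<bar>s - t\<bar>"
  using field_differentiable_bound[of "{0<..<T}" "\<lambda>s. u x s" "\<lambda>s. dudt s x" "2 * M + FM" s t]
    assms u_has_dudt dudt_abs_le
  by (auto intro: has_field_derivative_at_within simp: convex_real_interval)

definition moment :: "nat \<Rightarrow> real \<Rightarrow> real" where
  "moment m t = Jpow_pair J m (\<lambda>x. u x t)"

definition moment_F :: "nat \<Rightarrow> real \<Rightarrow> real" where
  "moment_F m t = Jpow_pair J m (\<lambda>x. F (u x t))"

lemma moment_bounds: "t \<in> {0..T} \<Longrightarrow> 0 \<le> moment m t \<and> moment m t \<le> M"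
  unfolding moment_def by (rule Jpow_pair_bounds[OF u_measurable u_nonneg u_le])

lemma moment_F_bounds: "t \<in> {0..T} \<Longrightarrow> 0 \<le> moment_F m t \<and> moment_F m t \<le> FM"
  unfolding moment_F_def using Fu_bounds by (intro Jpow_pair_bounds[OF Fu_measurable]) auto

lemma Jpow_pair_dudt:
  assumes "t \<in> {0..T}"
  shows "Jpow_pair J m (dudt t) = moment (Suc m) t - moment m t + moment_F m t"
proof -
  have bounds: "\<bar>Ju t x\<bar> \<le> M + FM" "\<bar>u x t\<bar> \<le> M + FM" "\<bar>F (u x t)\<bar> \<le> M + FM" for x
    using Ju_bounds[OF assms, of x] u_abs_le[OF assms, of x] Fu_bounds[OF assms, of x]
      M_nonneg FM_nonneg by auto
  have "Jpow_pair J m (dudt t) = Jpow_pair J m (Ju t) - moment m t + moment_F m t"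
    unfolding dudt_def[abs_def] moment_def moment_F_def
    by (intro Jpow_pair_diff_add[where B="M + FM"] Ju_measurable[OF assms] u_measurable[OF assms]
        Fu_measurable[OF assms] bounds)
  also have "Jpow_pair J m (Ju t) = moment (Suc m) t"
    unfolding moment_def Ju_def[abs_def]
    by (intro Jpow_pair_convolution[where B=M] u_measurable[OF assms] u_nonneg[OF assms] u_le[OF assms])
  finally show ?thesis .
qed

lemma Jpow_pair_difference_quotient:
  assumes "s \<in> {0..T}" "t \<in> {0..T}"
  shows "Jpow_pair J m (\<lambda>x. (u x s - u x t) / (s - t)) = (moment m s - moment m t) / (s - t)"
proof -
  note [measurable] = u_measurable[OF assms(1)] u_measurable[OF assms(2)]
  have "\<bar>u x s - u x t + 0\<bar> \<le> 2 * M" for x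
    using u_abs_le[OF assms(1), of x] u_abs_le[OF assms(2), of x] by (simp add: abs_le_iff)
  then have "Jpow_pair J m (\<lambda>x. 0 + 1 / (s - t) * (u x s - u x t + 0))
      = 0 + 1 / (s - t) * Jpow_pair J m (\<lambda>x. u x s - u x t + 0)"
    by (intro Jpow_pair_affine[where B="2 * M"]) auto
  also have "Jpow_pair J m (\<lambda>x. u x s - u x t + 0) = moment m s - moment m t + Jpow_pair J m (\<lambda>x. 0)"
    unfolding moment_def using u_abs_le assms
    by (intro Jpow_pair_diff_add[where B=M]) (auto simp: M_nonneg)
  finally show ?thesis by (simp add: Jpow_pair_const)
qed

lemma moment_has_derivative:
  assumes t: "t \<in> {0<..<T}"
  shows "(moment m has_real_derivative Jpow_pair J m (dudt t)) (at t)"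
proof -
  define g where "g s x = (u x s - u x t) / (s - t)" for s x
  have "((\<lambda>s. Jpow_pair J m (g s)) \<longlongrightarrow> Jpow_pair J m (dudt t)) (at t within {0<..<T})"
  proof (rule tendsto_Jpow_pair)
    show "g s \<in> borel_measurable borel" if "s \<in> {0<..<T}" for s
    proof -
      have [measurable]: "(\<lambda>x. u x s) \<in> borel_measurable borel" "(\<lambda>x. u x t) \<in> borel_measurable borel"
        using that t by (auto intro: u_measurable)
      show ?thesis unfolding g_def by measurable
    qed
    show "\<bar>g s x\<bar> \<le> 2 * M + FM" if "s \<in> {0<..<T}" for s x
      using u_lipschitz[OF that t, of x] M_nonneg FM_nonneg
      by (cases "s = t") (auto simp: g_def abs_divide divide_le_eq)
    show "((\<lambda>s. g s x) \<longlongrightarrow> dudt t x) (at t within {0<..<T})" for x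
      using u_has_dudt[OF t, of x] unfolding has_field_derivative_iff g_def
      by (rule tendsto_mono[OF at_le, rotated]) simp
  qed (use t dudt_measurable in auto)
  moreover have "\<forall>\<^sub>F s in at t within {0<..<T}. Jpow_pair J m (g s) = (moment m s - moment m t) / (s - t)"
    unfolding eventually_at_filter
  proof (intro always_eventually allI impI)
    fix s assume "s \<noteq> t" "s \<in> {0<..<T}"
    then show "Jpow_pair J m (g s) = (moment m s - moment m t) / (s - t)"
      unfolding g_def[abs_def] using t by (intro Jpow_pair_difference_quotient) auto
  qed
  ultimately have "((\<lambda>s. (moment m s - moment m t) / (s - t)) \<longlongrightarrow> Jpow_pair J m (dudt t))
      (at t within {0<..<T})"
    by (simp add: tendsto_cong)
  then show ?thesis
    unfolding has_field_derivative_iff using at_within_open[OF t open_greaterThanLessThan] by simp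
qed

lemma moment_continuous: "continuous_on {0..T} (moment m)"
  unfolding continuous_on_def
proof
  fix t assume t: "t \<in> {0..T}"
  have "((\<lambda>s. Jpow_pair J m (\<lambda>x. u x s)) \<longlongrightarrow> Jpow_pair J m (\<lambda>x. u x t)) (at t within {0..T})"
    using u_continuous_on_time t u_measurable u_abs_le
    by (intro tendsto_Jpow_pair[where B=M]) (auto simp: continuous_on_def)
  then show "(moment m \<longlongrightarrow> moment m t) (at t within {0..T})"
    by (simp add: moment_def[abs_def])
qed

text \<open>\<open>W t\<close> is the paper's \<open>W\<^sub>T(t) = \<integral> k\<^bsub>T-t\<^esub>(x) u(x, t) dx\<close>.\<close>

definition W :: "real \<Rightarrow> real" where
  "W t = (\<Sum>m. poisson_weight T m t * moment m t)"

lemma summable_weighted_moment: "t \<in> {0..T} \<Longrightarrow> summable (\<lambda>m. poisson_weight T m t * moment (f m) t)"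
  using moment_bounds by (intro summable_poisson_weight_mult[where B=M]) (auto simp: abs_of_nonneg)

lemma summable_weighted_moment_F: "t \<in> {0..T} \<Longrightarrow> summable (\<lambda>m. poisson_weight T m t * moment_F m t)"
  using moment_F_bounds by (intro summable_poisson_weight_mult[where B=FM]) (auto simp: abs_of_nonneg)

lemma W_bounds:
  assumes "t \<in> {0..T}"
  shows "0 \<le> W t \<and> W t \<le> M"
proof -
  have sums_M: "(\<lambda>m. poisson_weight T m t * M) sums M"
    using sums_mult2[OF sums_poisson_weight[of T t], of M] by simp
  have "W t \<le> (\<Sum>m. poisson_weight T m t * M)"
    unfolding W_def using assms moment_bounds poisson_weight_bounds
    by (intro suminf_le summable_weighted_moment[of t id, simplified] mult_left_mono
        sums_summable[OF sums_M]) auto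
  also have "\<dots> = M"
    using sums_M by (simp add: sums_iff)
  finally show ?thesis
    unfolding W_def using assms moment_bounds poisson_weight_bounds
    by (auto intro!: suminf_nonneg summable_weighted_moment[of t id, simplified])
qed

lemma W_continuous: "continuous_on {0..T} W"
proof (rule uniform_limit_theorem[where F=sequentially])
  show "\<forall>\<^sub>F n in sequentially. continuous_on {0..T} (\<lambda>t. \<Sum>i<n. poisson_weight T i t * moment i t)"
    by (intro always_eventually allI continuous_on_sum continuous_on_mult
        continuous_on_poisson_weight moment_continuous)
  have "\<bar>poisson_weight T m t * moment m t\<bar> \<le> T ^ m / fact m * M" if "t \<in> {0..T}" for m t
    using moment_bounds[OF that, of m] by (intro abs_poisson_weight_mult_le[OF that]) simp
  then show "uniform_limit {0..T} (\<lambda>n t. \<Sum>i<n. poisson_weight T i t * moment i t) W sequentially"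
    unfolding W_def[abs_def]
    by (intro Weierstrass_m_test[OF _ summable_mult2[OF summable_exp_terms]]) auto
qed simp

text \<open>Jensen's inequality for the probability measure \<open>k\<^bsub>T-t\<^esub>\<close>, via a supporting line of \<open>F\<close> at \<open>W t\<close>.\<close>

lemma F_W_le:
  assumes t: "t \<in> {0..T}"
  shows "F (W t) \<le> (\<Sum>m. poisson_weight T m t * moment_F m t)"
proof -
  define w where "w = W t"
  have w: "0 \<le> w" "w \<le> M"
    using W_bounds[OF t] by (auto simp: w_def)
  obtain D where D: "\<And>y. y \<ge> 0 \<Longrightarrow> F w + D * (y - w) \<le> F y"
    using F_above_tangent[OF w(1)] by blast
  have tangent_le: "F w + D * (moment m t - w) \<le> moment_F m t" for m
  proof -
    have "\<bar>u x t\<bar> \<le> M + FM" "\<bar>F (u x t)\<bar> \<le> M + FM" for x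
      using u_abs_le[OF t, of x] Fu_bounds[OF t, of x] M_nonneg FM_nonneg by auto
    moreover have "F w - D * w + D * u x t \<le> F (u x t)" for x
      using D[OF u_nonneg[OF t, of x]] by (simp add: algebra_simps)
    ultimately have "F w - D * w + D * moment m t \<le> moment_F m t"
      unfolding moment_def moment_F_def
      by (intro Jpow_pair_affine_le[where B="M + FM"] u_measurable[OF t] Fu_measurable[OF t])
    then show ?thesis
      by (simp add: algebra_simps)
  qed
  have "poisson_weight T m t * (F w - D * w) + D * (poisson_weight T m t * moment m t)
      \<le> poisson_weight T m t * moment_F m t" for m
    using mult_left_mono[OF tangent_le[of m], of "poisson_weight T m t"] poisson_weight_bounds[OF t, of m]
    by (simp add: algebra_simps)
  moreover have "(\<lambda>m. poisson_weight T m t * (F w - D * w) + D * (poisson_weight T m t * moment m t))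
      sums (1 * (F w - D * w) + D * W t)"
    using summable_weighted_moment[OF t, of id]
    by (intro sums_add sums_mult sums_mult2 sums_poisson_weight) (simp add: W_def summable_sums)
  moreover have "(\<lambda>m. poisson_weight T m t * moment_F m t) sums (\<Sum>m. poisson_weight T m t * moment_F m t)"
    using summable_weighted_moment_F[OF t] by (simp add: summable_sums)
  ultimately have "1 * (F w - D * w) + D * W t \<le> (\<Sum>m. poisson_weight T m t * moment_F m t)"
    by (rule sums_le)
  then show ?thesis by (simp add: w_def)
qed

definition W_term_derivative :: "nat \<Rightarrow> real \<Rightarrow> real" where
  "W_term_derivative m s =
     (poisson_weight T m s - (case m of 0 \<Rightarrow> 0 | Suc k \<Rightarrow> poisson_weight T k s)) * moment m s
     + poisson_weight T m s * Jpow_pair J m (dudt s)"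

lemma W_term_has_derivative:
  "s \<in> {0<..<T} \<Longrightarrow>
    ((\<lambda>s. poisson_weight T m s * moment m s) has_real_derivative W_term_derivative m s) (at s)"
  using poisson_weight_has_derivative moment_has_derivative
  unfolding W_term_derivative_def by (auto intro!: derivative_eq_intros)

lemma abs_W_term_derivative_le:
  assumes s: "s \<in> {0..T}"
  shows "\<bar>W_term_derivative m s\<bar>
    \<le> (T ^ m / fact m + (case m of 0 \<Rightarrow> 0 | Suc k \<Rightarrow> T ^ k / fact k)) * M + T ^ m / fact m * (2 * M + FM)"
proof -
  define e where "e = T ^ m / fact m + (case m of 0 \<Rightarrow> 0 | Suc k \<Rightarrow> T ^ k / fact k)"
  have "\<bar>poisson_weight T m s - (case m of 0 \<Rightarrow> 0 | Suc k \<Rightarrow> poisson_weight T k s)\<bar> \<le> e"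
    using poisson_weight_bounds[OF s, of m] poisson_weight_bounds[OF s, of "m - 1"]
    by (cases m) (auto simp: e_def)
  then have "\<bar>poisson_weight T m s - (case m of 0 \<Rightarrow> 0 | Suc k \<Rightarrow> poisson_weight T k s)\<bar>
      * \<bar>moment m s\<bar> \<le> e * M"
    using moment_bounds[OF s, of m] by (intro mult_mono) auto
  moreover have "\<bar>Jpow_pair J m (dudt s)\<bar> \<le> 2 * M + FM"
    unfolding Jpow_pair_dudt[OF s]
    using moment_bounds[OF s, of m] moment_bounds[OF s, of "Suc m"] moment_F_bounds[OF s, of m]
    by linarith
  then have "\<bar>poisson_weight T m s * Jpow_pair J m (dudt s)\<bar> \<le> T ^ m / fact m * (2 * M + FM)"
    by (rule abs_poisson_weight_mult_le[OF s])
  ultimately show ?thesis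
    unfolding W_term_derivative_def e_def[symmetric] abs_mult[symmetric]
    using abs_triangle_ineq by (smt (verit))
qed

text \<open>Differentiating the weights shifts the index by one, so the terms with \<open>moment\<close> telescope
  and only those with \<open>moment_F\<close> survive.\<close>

lemma sums_W_term_derivative:
  assumes t: "t \<in> {0..T}"
  shows "(\<lambda>m. W_term_derivative m t) sums (\<Sum>m. poisson_weight T m t * moment_F m t)"
proof -
  have "(\<lambda>m. poisson_weight T m t * moment (Suc m) t
      - (case m of 0 \<Rightarrow> 0 | Suc k \<Rightarrow> poisson_weight T k t * moment (Suc k) t)
      + poisson_weight T m t * moment_F m t) sums (0 + (\<Sum>m. poisson_weight T m t * moment_F m t))"
    using summable_weighted_moment[OF t, of Suc] summable_weighted_moment_F[OF t]
    by (intro sums_add sums_telescoping_shift) (auto simp: summable_sums)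
  moreover have "poisson_weight T m t * moment (Suc m) t
      - (case m of 0 \<Rightarrow> 0 | Suc k \<Rightarrow> poisson_weight T k t * moment (Suc k) t)
      + poisson_weight T m t * moment_F m t = W_term_derivative m t" for m
    using t by (cases m) (simp_all add: W_term_derivative_def Jpow_pair_dudt algebra_simps)
  ultimately show ?thesis
    by simp
qed

lemma W_has_derivative:
  assumes t: "t \<in> {0<..<T}"
  shows "(W has_real_derivative (\<Sum>m. poisson_weight T m t * moment_F m t)) (at t)"
proof -
  have summable_bound: "summable (\<lambda>m. (T ^ m / fact m + (case m of 0 \<Rightarrow> 0 | Suc k \<Rightarrow> T ^ k / fact k)) * M
      + T ^ m / fact m * (2 * M + FM))"
    using summable_Suc_iff[of "\<lambda>m. case m of 0 \<Rightarrow> 0 | Suc k \<Rightarrow> T ^ k / fact k"]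
    by (intro summable_add summable_mult2 summable_exp_terms) (simp add: summable_exp_terms)
  have "(W has_real_derivative (\<Sum>m. W_term_derivative m t)) (at t)"
    unfolding W_def[abs_def]
  proof (rule has_real_derivative_suminf[of 0 T])
    show "\<bar>W_term_derivative m s\<bar> \<le> (T ^ m / fact m + (case m of 0 \<Rightarrow> 0 | Suc k \<Rightarrow> T ^ k / fact k)) * M
        + T ^ m / fact m * (2 * M + FM)" if "s \<in> {0<..<T}" for m s
      using that by (intro abs_W_term_derivative_le) auto
  qed (use t summable_bound summable_weighted_moment[of t id] W_term_has_derivative in auto)
  then show ?thesis
    using sums_W_term_derivative[of t] t by (simp add: sums_iff)
qed

lemma W_ge_W0:
  assumes "t \<in> {0..<T}"
  shows "W 0 \<le> W t"
proof (rule DERIV_nonneg_imp_increasing_open[of 0 t W])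
  show "continuous_on {0..t} W"
    using assms by (intro continuous_on_subset[OF W_continuous]) auto
  fix s assume "0 < s" "s < t"
  with assms have s: "s \<in> {0<..<T}" by auto
  have "0 \<le> F (W s)"
    using F_nonneg W_bounds[of s] s by auto
  then show "\<exists>y. (W has_real_derivative y) (at s) \<and> 0 \<le> y"
    using W_has_derivative[OF s] F_W_le[of s] s by fastforce
qed (use assms in auto)

lemma kint_eq_W0: "kint J T (\<lambda>x. u x 0) = ennreal (W 0)"
  unfolding W_def moment_def using T_pos
  by (intro kint_eq_suminf[where B=M] u_measurable u_nonneg u_le) auto

text \<open>Otherwise \<open>h(W 0) < T\<close>, whereas \<open>W\<close>, a supersolution of \<open>w' = F(w)\<close> on \<open>(0, T)\<close>,
  forces \<open>\<integral>\<^bsub>W 0\<^esub>\<^sup>\<infinity> 1/F \<ge> T\<close>.\<close>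

lemma W0_le_hinv:
  assumes "0 \<le> a0" "hfun F a0 < \<infinity>"
  shows "W 0 \<le> hinv F T"
proof (rule ccontr)
  assume "\<not> W 0 \<le> hinv F T"
  then have hinv_less: "hinv F T < W 0" by simp
  note hinv = hinv_spec[OF assms T_pos]
  have "hfun F (W 0) \<le> ennreal T"
    using hfun_antimono[of "hinv F T" "W 0"] hinv hinv_less by simp
  then have hfun_W0: "hfun F (W 0) < ennreal T"
    using hfun_strict_antimono[of "hinv F T" "W 0"] hinv hinv_less
    by (simp add: le_less_trans[OF _ ennreal_less_top])
  have F_pos: "F v > 0" if "W 0 \<le> v" for v
    using F_pos_above[of "hinv F T" v] hinv hinv_less that by auto
  define b where "b = max M (W 0)"
  have "ennreal T \<le> ennreal (integral {W 0..b} (\<lambda>v. 1 / F v))"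
  proof (rule ennreal_leI, rule supersolution_lifetime_le)
    show "continuous_on {W 0..b} F"
      using W_bounds[of 0] T_pos by (intro continuous_on_subset[OF F_continuous]) auto
    show "W t \<in> {W 0..b}" if "t \<in> {0<..<T}" for t
      using W_ge_W0[of t] W_bounds[of t] that by (auto simp: b_def)
  qed (use F_pos W_has_derivative F_W_le in auto)
  also have "\<dots> \<le> hfun F (W 0)"
    using hfun_eq_integral_plus[of "W 0" b] W_bounds[of 0] T_pos F_pos by (simp add: b_def)
  finally show False
    using hfun_W0 by simp
qed

end

lemma symmetric_probability_densityI:
  fixes J :: "'a::euclidean_space \<Rightarrow> real"
  assumes "\<And>x. J x \<ge> 0" "\<And>x y. norm x = norm y \<Longrightarrow> J x = J y"
    and "integrable lborel J" "(\<integral>x. J x \<partial>lborel) = 1"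
  shows "symmetric_probability_density J"
proof
  show "J (- x) = J x" for x
    by (rule assms(2)) simp
  show "J \<in> borel_measurable borel"
    using borel_measurable_integrable[OF assms(3)] by simp
  show "(\<integral>\<^sup>+x. ennreal (J x) \<partial>lborel) = 1"
    using nn_integral_eq_integral[OF assms(3)] assms(1,4) by simp
qed (use assms(1) in auto)

lemma (in convex_reaction) bounded_solution_if_classical_solution:
  assumes "symmetric_probability_density J" "classical_solution J F u0 S u" "0 < T" "T < S"
  obtains M FM where "bounded_solution J F F' u T M FM"
proof -
  note u = assms(2)[unfolded classical_solution_def]
  have "bounded ((\<lambda>(x, t). u x t) ` (UNIV \<times> {0..T}))"
    using u assms(3,4) by simp
  then obtain M where "\<forall>v\<in>(\<lambda>(x, t). u x t) ` (UNIV \<times> {0..T}). \<bar>v\<bar> \<le> M"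
    unfolding bounded_real by blast
  then have M: "\<bar>u x t\<bar> \<le> M" if "t \<in> {0..T}" for x t
    using that by (auto intro!: image_eqI[where x="(x, t)"])
  have "compact (F ` {0..M})"
    by (rule compact_continuous_image[OF continuous_on_subset[OF F_continuous]]) auto
  then obtain FM where "\<forall>v\<in>F ` {0..M}. \<bar>v\<bar> \<le> FM"
    using compact_imp_bounded bounded_real by blast
  then have FM: "F v \<le> FM" if "v \<in> {0..M}" for v
    using that abs_ge_self[of "F v"] by (blast intro: order.trans)
  have "UNIV \<times> {0..T} \<subseteq> UNIV \<times> {0..<S}"
    using assms(4) by auto
  have "bounded_solution J F F' u T M FM"
  proof (rule bounded_solution.intro[OF assms(1) convex_reaction_axioms], unfold_locales)
    show "0 < T"
      by (rule assms(3))
    show "continuous_on (UNIV \<times> {0..T}) (\<lambda>(x, t). u x t)"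
      using u \<open>UNIV \<times> {0..T} \<subseteq> UNIV \<times> {0..<S}\<close> by (blast intro: continuous_on_subset)
    show "0 \<le> u x t" if "t \<in> {0..T}" for x t
      using u that assms(4) by simp
    show "u x t \<le> M" if "t \<in> {0..T}" for x t
      using M[OF that, of x] by simp
    show "F v \<le> FM" if "v \<in> {0..M}" for v
      using FM[OF that] .
    show "((\<lambda>s. u x s) has_real_derivative
        (\<integral>y. J (x - y) * u y t \<partial>lborel) - u x t + F (u x t)) (at t)" if "t \<in> {0<..<T}" for x t
      using u that assms(4) by simp
  qed
  then show ?thesis
    using that by blast
qed

theorem theorem2p1:
  fixes J :: "'a::euclidean_space \<Rightarrow> real"
    and F :: "real \<Rightarrow> real"
    and u0 :: "'a \<Rightarrow> real"
    and T :: real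
  assumes J_nonneg: "\<And>x. J x \<ge> 0"
    and J_radial: "\<And>x y. norm x = norm y \<Longrightarrow> J x = J y"
    and J_int: "integrable lborel J"
    and J_mass: "(\<integral>x. J x \<partial>lborel) = 1"
    and F_nonneg: "\<And>u. u \<ge> 0 \<Longrightarrow> F u \<ge> 0"
    and F_convex: "convex_on {0..} F"
    and F_C1: "\<exists>F'. (\<forall>u\<ge>0. (F has_real_derivative F' u) (at u within {0..})) \<and> continuous_on {0..} F'"
    and F_zero: "F 0 = 0"
    and F_Osgood: "\<exists>a\<ge>0. hfun F a < \<infinity>"
    and u0_nonneg: "\<And>x. u0 x \<ge> 0"
    and T_pos: "T > 0"
    and blowup_cond: "kint J T u0 > ennreal (hinv F T)"
  shows "\<forall>S u. classical_solution J F u0 S u \<longrightarrow> S \<le> T"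
proof (intro allI impI)
  fix S u
  assume u: "classical_solution J F u0 S u"
  obtain F' where "\<forall>u\<ge>0. (F has_real_derivative F' u) (at u within {0..})" "continuous_on {0..} F'"
    using F_C1 by blast
  then interpret convex_reaction F F'
    using F_nonneg F_convex F_zero by unfold_locales auto
  obtain a0 where a0: "0 \<le> a0" "hfun F a0 < \<infinity>"
    using F_Osgood by blast
  show "S \<le> T"
  proof (rule ccontr)
    assume "\<not> S \<le> T"
    then obtain M FM where "bounded_solution J F F' u T M FM"
      using bounded_solution_if_classical_solution[OF
          symmetric_probability_densityI[OF J_nonneg J_radial J_int J_mass] u T_pos]
      by force
    then interpret bounded_solution J F F' u T M FM .
    have "kint J T u0 = ennreal (W 0)"
      using kint_eq_W0 u by (simp add: classical_solution_def)
    then have "hinv F T < W 0"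
      using blowup_cond hinv_spec(1)[OF a0 T_pos] by (simp add: ennreal_less_iff)
    with W0_le_hinv[OF a0] show False
      by simp
  qed
qed

end
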